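(* Let $n\ge 2$ and $P,Q\in\Gamma_n$. Then \[ D_{I\Delta}\le \tfrac23 D_{h\Delta}\le 2D_{hI}\le D_{TJ}, \] \[ D_{I\Delta}\le \tfrac23 D_{h\Delta}\le \tfrac12 D_{J\Delta}\le \tfrac13 D_{T\Delta}\le D_{TJ}, \] and \[ D_{TJ}\le \tfrac23 D_{Th}\le 2D_{Jh}\le \tfrac16 D_{\Psi\Delta}\le \tfrac15 D_{\Psi I}\le \tfrac29 D_{\Psi h}\le \tfrac14 D_{\Psi J}\le \tfrac13 D_{\Psi T}, \] where all quantities are evaluated at $(P\|Q)$.
   Context: $\Gamma_n=\{P=(p_1,\dots,p_n): p_i>0,\ \sum_{i=1}^n p_i=1\}$. For $P,Q\in\Gamma_n$: $h(P\|Q)=\frac12\sum_{i=1}^n(\sqrt{p_i}-\sqrt{q_i})^2$; $\Delta(P\|Q)=\sum_{i=1}^n\frac{(p_i-q_i)^2}{p_i+q_i}$; $\Psi(P\|Q)=\sum_{i=1}^n\frac{(p_i-q_i)^2(p_i+q_i)}{p_iq_i}$; $J(P\|Q)=\sum_{i=1}^n(p_i-q_i)\ln\frac{p_i}{q_i}$; $I(P\|Q)=\frac12\Big[\sum_{i=1}^n p_i\ln\frac{2p_i}{p_i+q_i}+\sum_{i=1}^n q_i\ln\frac{2q_i}{p_i+q_i}\Big]$; $T(P\|Q)=\sum_{i=1}^n\frac{p_i+q_i}{2}\ln\frac{p_i+q_i}{2\sqrt{p_iq_i}}$. Differences: $D_{\Psi T}=\frac1{16}\Psi-T$, $D_{\Psi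 J}=\frac1{16}\Psi-\frac18J$, $D_{\Psi h}=\frac1{16}\Psi-h$, $D_{\Psi I}=\frac1{16}\Psi-I$, $D_{\Psi\Delta}=\frac1{16}\Psi-\frac14\Delta$, $D_{TJ}=T-\frac18J$, $D_{Th}=T-h$, $D_{T\Delta}=T-\frac14\Delta$, $D_{Jh}=\frac18J-h$, $D_{J\Delta}=\frac18J-\frac14\Delta$, $D_{hI}=h-I$, $D_{h\Delta}=h-\frac14\Delta$, $D_{I\Delta}=I-\frac14\Delta$ (all evaluated at $(P\|Q)$). *)

theory Defs
  imports Complex_Main
begin

text \<open>Probability distributions of length n are represented as functions
  nat => real, with components indexed by 0..n-1.\<close>

definition Gamma :: "nat \<Rightarrow> (nat \<Rightarrow> real) set" where
  "Gamma n = {P. (\<forall>i<n. P i > 0) \<and> (\<Sum>i<n. P i) = 1}"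

definition hell :: "nat \<Rightarrow> (nat \<Rightarrow> real) \<Rightarrow> (nat \<Rightarrow> real) \<Rightarrow> real" where
  "hell n P Q = 1/2 * (\<Sum>i<n. (sqrt (P i) - sqrt (Q i))^2)"

definition Delta :: "nat \<Rightarrow> (nat \<Rightarrow> real) \<Rightarrow> (nat \<Rightarrow> real) \<Rightarrow> real" where
  "Delta n P Q = (\<Sum>i<n. (P i - Q i)^2 / (P i + Q i))"

definition Psi :: "nat \<Rightarrow> (nat \<Rightarrow> real) \<Rightarrow> (nat \<Rightarrow> real) \<Rightarrow> real" where
  "Psi n P Q = (\<Sum>i<n. (P i - Q i)^2 * (P i + Q i) / (P i * Q i))"

definition Jdiv :: "nat \<Rightarrow> (nat \<Rightarrow> real) \<Rightarrow> (nat \<Rightarrow> real) \<Rightarrow> real" where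
  "Jdiv n P Q = (\<Sum>i<n. (P i - Q i) * ln (P i / Q i))"

definition Idiv :: "nat \<Rightarrow> (nat \<Rightarrow> real) \<Rightarrow> (nat \<Rightarrow> real) \<Rightarrow> real" where
  "Idiv n P Q = 1/2 * ((\<Sum>i<n. P i * ln (2 * P i / (P i + Q i)))
                     + (\<Sum>i<n. Q i * ln (2 * Q i / (P i + Q i))))"

definition Tdiv :: "nat \<Rightarrow> (nat \<Rightarrow> real) \<Rightarrow> (nat \<Rightarrow> real) \<Rightarrow> real" where
  "Tdiv n P Q = (\<Sum>i<n. (P i + Q i) / 2 * ln ((P i + Q i) / (2 * sqrt (P i * Q i))))"

definition "D_PsiT n P Q = Psi n P Q / 16 - Tdiv n P Q"
definition "D_PsiJ n P Q = Psi n P Q / 16 - Jdiv n P Q / 8"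
definition "D_Psih n P Q = Psi n P Q / 16 - hell n P Q"
definition "D_PsiI n P Q = Psi n P Q / 16 - Idiv n P Q"
definition "D_PsiDelta n P Q = Psi n P Q / 16 - Delta n P Q / 4"
definition "D_TJ n P Q = Tdiv n P Q - Jdiv n P Q / 8"
definition "D_Th n P Q = Tdiv n P Q - hell n P Q"
definition "D_TDelta n P Q = Tdiv n P Q - Delta n P Q / 4"
definition "D_Jh n P Q = Jdiv n P Q / 8 - hell n P Q"
definition "D_JDelta n P Q = Jdiv n P Q / 8 - Delta n P Q / 4"
definition "D_hI n P Q = hell n P Q - Idiv n P Q"
definition "D_hDelta n P Q = hell n P Q - Delta n P Q / 4"
definition "D_IDelta n P Q = Idiv n P Q - Delta n P Q / 4"

end

theory Submission
  imports Defs "HOL-Analysis.Convex"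
begin

(* Every measure here is a Csiszar f-divergence \<Sum>i. q\<^sub>i f(p\<^sub>i / q\<^sub>i), and each
   inequality asserts that some linear combination of them is nonnegative. The same
   combination g of the generators satisfies g(1) = g'(1) = 0, so g \<ge> 0 on (0, \<infinity>) as soon
   as g is convex there, and then the divergence is a sum of nonnegative terms; in
   particular only positivity of the entries is used. Writing t = s\<^sup>2 to clear the
   square root of the Hellinger generator, g''(t) = N(s) / (t\<^sup>3 (t + 1)\<^sup>3) for a
   polynomial N, and in every case N(s) = (s - 1)\<^sup>4 r(s) with r visibly nonnegative
   for s > 0. *)

definition f_divergence ::
    "nat \<Rightarrow> (real \<Rightarrow> real) \<Rightarrow> (nat \<Rightarrow> real) \<Rightarrow> (nat \<Rightarrow> real) \<Rightarrow> real" where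
  "f_divergence n f P Q = (\<Sum>i<n. Q i * f (P i / Q i))"

lemma f_divergence_nonneg:
  assumes "\<And>t. 0 < t \<Longrightarrow> 0 \<le> f t"
    and "\<forall>i<n. 0 < P i" and "\<forall>i<n. 0 < Q i"
  shows "0 \<le> f_divergence n f P Q"
  unfolding f_divergence_def using assms by (auto intro!: sum_nonneg)

lemma f_divergence_eq_sum:
  assumes "\<And>t q. 0 < t \<Longrightarrow> 0 < q \<Longrightarrow> g (t * q) q = q * f t"
    and "\<forall>i<n. 0 < P i" and "\<forall>i<n. 0 < Q i"
  shows "f_divergence n f P Q = (\<Sum>i<n. g (P i) (Q i))"
  unfolding f_divergence_def
proof (rule sum.cong)
  fix i assume "i \<in> {..<n}"
  then have "0 < P i / Q i" "0 < Q i" "P i = P i / Q i * Q i" using assms(2,3) by auto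
  then show "Q i * f (P i / Q i) = g (P i) (Q i)" using assms(1) by metis
qed simp

definition hell_gen :: "real \<Rightarrow> real" where
  "hell_gen t = (sqrt t - 1)^2 / 2"
definition Delta_gen :: "real \<Rightarrow> real" where
  "Delta_gen t = (t - 1)^2 / (t + 1)"
definition Psi_gen :: "real \<Rightarrow> real" where
  "Psi_gen t = (t - 1)^2 * (t + 1) / t"
definition Jdiv_gen :: "real \<Rightarrow> real" where
  "Jdiv_gen t = (t - 1) * ln t"
definition Idiv_gen :: "real \<Rightarrow> real" where
  "Idiv_gen t = (t * ln (2 * t / (t + 1)) + ln (2 / (t + 1))) / 2"
definition Tdiv_gen :: "real \<Rightarrow> real" where
  "Tdiv_gen t = (t + 1) / 2 * ln ((t + 1) / (2 * sqrt t))"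

lemma hell_eq_f_divergence:
  assumes "\<forall>i<n. 0 < P i" and "\<forall>i<n. 0 < Q i"
  shows "hell n P Q = f_divergence n hell_gen P Q"
proof -
  have "1/2 * (sqrt (t * q) - sqrt q)^2 = q * hell_gen t" if "0 < q" for t q :: real
  proof -
    have "sqrt (t * q) - sqrt q = sqrt q * (sqrt t - 1)"
      by (simp add: real_sqrt_mult algebra_simps)
    then show ?thesis using that by (simp add: hell_gen_def power_mult_distrib)
  qed
  then show ?thesis
    unfolding hell_def sum_distrib_left
    by (intro assms f_divergence_eq_sum[symmetric, where g = "\<lambda>p q. 1/2 * (sqrt p - sqrt q)^2"])
qed

lemma Delta_eq_f_divergence:
  assumes "\<forall>i<n. 0 < P i" and "\<forall>i<n. 0 < Q i"
  shows "Delta n P Q = f_divergence n Delta_gen P Q"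
proof -
  have "(t * q - q)^2 / (t * q + q) = q * Delta_gen t" if "0 < t" "0 < q" for t q :: real
  proof -
    have "t * q - q = q * (t - 1)" "t * q + q = q * (t + 1)" by (simp_all add: algebra_simps)
    moreover have "t + 1 \<noteq> 0" using that by simp
    ultimately show ?thesis using that by (simp add: Delta_gen_def power2_eq_square)
  qed
  then show ?thesis
    unfolding Delta_def
    by (intro f_divergence_eq_sum[where g = "\<lambda>p q. (p - q)^2 / (p + q)", symmetric] assms)
qed

lemma Psi_eq_f_divergence:
  assumes "\<forall>i<n. 0 < P i" and "\<forall>i<n. 0 < Q i"
  shows "Psi n P Q = f_divergence n Psi_gen P Q"
proof -
  have "(t * q - q)^2 * (t * q + q) / (t * q * q) = q * Psi_gen t"
    if "0 < t" "0 < q" for t q :: real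
  proof -
    have "t * q - q = q * (t - 1)" "t * q + q = q * (t + 1)" by (simp_all add: algebra_simps)
    then show ?thesis using that by (simp add: Psi_gen_def power2_eq_square)
  qed
  then show ?thesis
    unfolding Psi_def
    by (intro assms f_divergence_eq_sum[symmetric,
          where g = "\<lambda>p q. (p - q)^2 * (p + q) / (p * q)"])
qed

lemma Jdiv_eq_f_divergence:
  assumes "\<forall>i<n. 0 < P i" and "\<forall>i<n. 0 < Q i"
  shows "Jdiv n P Q = f_divergence n Jdiv_gen P Q"
proof -
  have "(t * q - q) * ln (t * q / q) = q * Jdiv_gen t" if "0 < q" for t q :: real
    using that by (simp add: Jdiv_gen_def algebra_simps)
  then show ?thesis
    unfolding Jdiv_def
    by (intro f_divergence_eq_sum[where g = "\<lambda>p q. (p - q) * ln (p / q)", symmetric] assms)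
qed

lemma Idiv_eq_f_divergence:
  assumes "\<forall>i<n. 0 < P i" and "\<forall>i<n. 0 < Q i"
  shows "Idiv n P Q = f_divergence n Idiv_gen P Q"
proof -
  have "1/2 * (t * q * ln (2 * (t * q) / (t * q + q)) + q * ln (2 * q / (t * q + q)))
          = q * Idiv_gen t" if "0 < t" "0 < q" for t q :: real
  proof -
    have "t * q + q = (t + 1) * q" by (simp add: algebra_simps)
    then have "2 * (t * q) / (t * q + q) = 2 * t / (t + 1)" "2 * q / (t * q + q) = 2 / (t + 1)"
      using that by (simp_all add: mult.assoc[symmetric])
    then show ?thesis by (simp add: Idiv_gen_def algebra_simps)
  qed
  then show ?thesis
    unfolding Idiv_def sum.distrib[symmetric] sum_distrib_left
    by (intro assms f_divergence_eq_sum[symmetric,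
          where g = "\<lambda>p q. 1/2 * (p * ln (2 * p / (p + q)) + q * ln (2 * q / (p + q)))"])
qed

lemma Tdiv_eq_f_divergence:
  assumes "\<forall>i<n. 0 < P i" and "\<forall>i<n. 0 < Q i"
  shows "Tdiv n P Q = f_divergence n Tdiv_gen P Q"
proof -
  have "(t * q + q) / 2 * ln ((t * q + q) / (2 * sqrt (t * q * q))) = q * Tdiv_gen t"
    if "0 < t" "0 < q" for t q :: real
  proof -
    have "t * q + q = (t + 1) * q" "sqrt (t * q * q) = sqrt t * q"
      using that by (simp_all add: algebra_simps real_sqrt_mult)
    then have "(t * q + q) / (2 * sqrt (t * q * q)) = (t + 1) / (2 * sqrt t)"
      using that by (simp add: mult.assoc[symmetric])
    then show ?thesis by (simp add: Tdiv_gen_def algebra_simps)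
  qed
  then show ?thesis
    unfolding Tdiv_def
    by (intro assms f_divergence_eq_sum[symmetric,
          where g = "\<lambda>p q. (p + q) / 2 * ln ((p + q) / (2 * sqrt (p * q)))"])
qed

definition gen_comb :: "real \<Rightarrow> real \<Rightarrow> real \<Rightarrow> real \<Rightarrow> real \<Rightarrow> real \<Rightarrow> real \<Rightarrow> real" where
  "gen_comb a b c d e k t =
     a * hell_gen t + b * Delta_gen t + c * Psi_gen t + d * Jdiv_gen t
     + e * Idiv_gen t + k * Tdiv_gen t"

lemma f_divergence_gen_comb:
  assumes "\<forall>i<n. 0 < P i" and "\<forall>i<n. 0 < Q i"
  shows "f_divergence n (gen_comb a b c d e k) P Q
    = a * hell n P Q + b * Delta n P Q + c * Psi n P Q + d * Jdiv n P Q
      + e * Idiv n P Q + k * Tdiv n P Q"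
  unfolding hell_eq_f_divergence[OF assms] Delta_eq_f_divergence[OF assms]
    Psi_eq_f_divergence[OF assms] Jdiv_eq_f_divergence[OF assms]
    Idiv_eq_f_divergence[OF assms] Tdiv_eq_f_divergence[OF assms]
  by (simp add: f_divergence_def gen_comb_def sum_distrib_left sum.distrib algebra_simps)

lemma has_real_derivative_generators:
  assumes "0 < t"
  shows "(hell_gen has_real_derivative (1 - 1 / sqrt t) / 2) (at t)"
    and "(Delta_gen has_real_derivative 1 - 4 / (t + 1)^2) (at t)"
    and "(Psi_gen has_real_derivative 2 * t - 1 - 1 / t^2) (at t)"
    and "(Jdiv_gen has_real_derivative ln t + 1 - 1 / t) (at t)"
    and "(Idiv_gen has_real_derivative ln (2 * t / (t + 1)) / 2) (at t)"
    and "(Tdiv_gen has_real_derivative ln ((t + 1) / (2 * sqrt t)) / 2 + (t - 1) / (4 * t))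
           (at t)"
  unfolding hell_gen_def[abs_def] Delta_gen_def[abs_def] Psi_gen_def[abs_def]
    Jdiv_gen_def[abs_def] Idiv_gen_def[abs_def] Tdiv_gen_def[abs_def]
  using assms
  by (auto intro!: derivative_eq_intros) (simp_all add: divide_simps add_pos_pos, algebra+)

lemma has_real_derivative_generators':
  assumes "0 < t"
  shows "((\<lambda>t. (1 - 1 / sqrt t) / 2) has_real_derivative 1 / (4 * t * sqrt t)) (at t)"
    and "((\<lambda>t. 1 - 4 / (t + 1)^2) has_real_derivative 8 / (t + 1)^3) (at t)"
    and "((\<lambda>t. 2 * t - 1 - 1 / t^2) has_real_derivative 2 + 2 / t^3) (at t)"
    and "((\<lambda>t. ln t + 1 - 1 / t) has_real_derivative 1 / t + 1 / t^2) (at t)"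
    and "((\<lambda>t. ln (2 * t / (t + 1)) / 2) has_real_derivative 1 / (2 * t * (t + 1)))
           (at t)"
    and "((\<lambda>t. ln ((t + 1) / (2 * sqrt t)) / 2 + (t - 1) / (4 * t))
           has_real_derivative (t^2 + 1) / (4 * t^2 * (t + 1))) (at t)"
  using assms
  by (auto intro!: derivative_eq_intros)
    (simp_all add: divide_simps add_pos_pos mult.assoc, algebra+)

definition gen_comb' :: "real \<Rightarrow> real \<Rightarrow> real \<Rightarrow> real \<Rightarrow> real \<Rightarrow> real \<Rightarrow> real \<Rightarrow> real" where
  "gen_comb' a b c d e k t =
     a * ((1 - 1 / sqrt t) / 2) + b * (1 - 4 / (t + 1)^2) + c * (2 * t - 1 - 1 / t^2)
     + d * (ln t + 1 - 1 / t) + e * (ln (2 * t / (t + 1)) / 2)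
     + k * (ln ((t + 1) / (2 * sqrt t)) / 2 + (t - 1) / (4 * t))"

definition gen_comb''_numerator :: "real \<Rightarrow> real \<Rightarrow> real \<Rightarrow> real \<Rightarrow> real \<Rightarrow> real \<Rightarrow> real \<Rightarrow> real" where
  "gen_comb''_numerator a b c d e k s =
     a * s^3 * (s^2 + 1)^3 / 4 + b * 8 * s^6 + c * 2 * (s^6 + 1) * (s^2 + 1)^3
     + d * s^2 * (s^2 + 1)^4 + e * s^4 * (s^2 + 1)^2 / 2 + k * s^2 * (s^4 + 1) * (s^2 + 1)^2 / 4"

lemma has_real_derivative_gen_comb:
  assumes "0 < t"
  shows "(gen_comb a b c d e k has_real_derivative gen_comb' a b c d e k t) (at t)"
  unfolding gen_comb_def[abs_def] gen_comb'_def
  by (intro DERIV_add DERIV_cmult has_real_derivative_generators[OF assms])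

lemma has_real_derivative_gen_comb':
  assumes "0 < t"
  shows "(gen_comb' a b c d e k has_real_derivative
           gen_comb''_numerator a b c d e k (sqrt t) / (t^3 * (t + 1)^3)) (at t)"
proof (rule DERIV_cong)
  show "(gen_comb' a b c d e k has_real_derivative
          a * (1 / (4 * t * sqrt t)) + b * (8 / (t + 1)^3) + c * (2 + 2 / t^3)
          + d * (1 / t + 1 / t^2) + e * (1 / (2 * t * (t + 1)))
          + k * ((t^2 + 1) / (4 * t^2 * (t + 1)))) (at t)"
    unfolding gen_comb'_def[abs_def]
    by (intro DERIV_add DERIV_cmult has_real_derivative_generators'[OF assms])
  define s where "s = sqrt t"
  have s: "0 < s" "t = s^2" "s^2 + 1 \<noteq> 0"
    using assms by (auto simp: s_def add_pos_nonneg)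
  show "a * (1 / (4 * t * sqrt t)) + b * (8 / (t + 1)^3) + c * (2 + 2 / t^3)
          + d * (1 / t + 1 / t^2) + e * (1 / (2 * t * (t + 1)))
          + k * ((t^2 + 1) / (4 * t^2 * (t + 1)))
        = gen_comb''_numerator a b c d e k (sqrt t) / (t^3 * (t + 1)^3)"
    unfolding gen_comb''_numerator_def s_def[symmetric] s(2) using s(1,3)
    by (simp add: divide_simps) algebra
qed

lemma gen_comb_nonneg:
  assumes "\<And>s. 0 < s \<Longrightarrow> 0 \<le> gen_comb''_numerator a b c d e k s" and "0 < t"
  shows "0 \<le> gen_comb a b c d e k t"
proof -
  have "gen_comb' a b c d e k 1 * (t - 1) \<le> gen_comb a b c d e k t - gen_comb a b c d e k 1"
    using assms
    by (intro f''_imp_f'[of "{0<..}"])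
       (auto intro!: has_real_derivative_gen_comb has_real_derivative_gen_comb' divide_nonneg_pos)
  then show ?thesis
    by (simp add: gen_comb_def gen_comb'_def hell_gen_def Delta_gen_def Psi_gen_def
        Jdiv_gen_def Idiv_gen_def Tdiv_gen_def)
qed

lemma divergence_comb_nonneg:
  assumes "\<And>s. gen_comb''_numerator a b c d e k s = (s - 1)^4 * r s"
    and "\<And>s. 0 < s \<Longrightarrow> 0 \<le> r s"
    and "\<forall>i<n. 0 < P i" and "\<forall>i<n. 0 < Q i"
  shows "0 \<le> a * hell n P Q + b * Delta n P Q + c * Psi n P Q + d * Jdiv n P Q
      + e * Idiv n P Q + k * Tdiv n P Q"
proof -
  have "0 \<le> gen_comb a b c d e k t" if "0 < t" for t
    using assms(1,2) that by (intro gen_comb_nonneg) simp_all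
  then have "0 \<le> f_divergence n (gen_comb a b c d e k) P Q"
    using assms(3,4) by (rule f_divergence_nonneg)
  then show ?thesis using assms(3,4) by (simp add: f_divergence_gen_comb)
qed

lemma D_IDelta_le_D_hDelta:
  assumes "\<forall>i<n. 0 < P i" and "\<forall>i<n. 0 < Q i"
  shows "D_IDelta n P Q \<le> 2/3 * D_hDelta n P Q"
proof -
  have "0 \<le> 2/3 * hell n P Q + 1/12 * Delta n P Q + 0 * Psi n P Q + 0 * Jdiv n P Q
      + (-1) * Idiv n P Q + 0 * Tdiv n P Q"
  proof (rule divergence_comb_nonneg[OF _ _ assms])
    show "gen_comb''_numerator (2/3) (1/12) 0 0 (-1) 0 s
      = (s - 1)^4 * (s^3 * (s^2 + s + 1) / 6)" for s
      by (simp add: gen_comb''_numerator_def field_simps) algebra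
  qed simp
  then show ?thesis by (simp add: D_IDelta_def D_hDelta_def)
qed

lemma D_hDelta_le_D_hI:
  assumes "\<forall>i<n. 0 < P i" and "\<forall>i<n. 0 < Q i"
  shows "2/3 * D_hDelta n P Q \<le> 2 * D_hI n P Q"
proof -
  have "0 \<le> 4/3 * hell n P Q + 1/6 * Delta n P Q + 0 * Psi n P Q + 0 * Jdiv n P Q
      + (-2) * Idiv n P Q + 0 * Tdiv n P Q"
  proof (rule divergence_comb_nonneg[OF _ _ assms])
    show "gen_comb''_numerator (4/3) (1/6) 0 0 (-2) 0 s
      = (s - 1)^4 * (s^3 * (s^2 + s + 1) / 3)" for s
      by (simp add: gen_comb''_numerator_def field_simps) algebra
  qed simp
  then show ?thesis by (simp add: D_hDelta_def D_hI_def)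
qed

lemma D_hI_le_D_TJ:
  assumes "\<forall>i<n. 0 < P i" and "\<forall>i<n. 0 < Q i"
  shows "2 * D_hI n P Q \<le> D_TJ n P Q"
proof -
  have "0 \<le> (-2) * hell n P Q + 0 * Delta n P Q + 0 * Psi n P Q + (-1/8) * Jdiv n P Q
      + 2 * Idiv n P Q + 1 * Tdiv n P Q"
  proof (rule divergence_comb_nonneg[OF _ _ assms])
    show "gen_comb''_numerator (-2) 0 0 (-1/8) 2 1 s
      = (s - 1)^4 * (s^2 * (s^2 + 1)^2 / 8)" for s
      by (simp add: gen_comb''_numerator_def field_simps) algebra
  qed simp
  then show ?thesis by (simp add: D_hI_def D_TJ_def)
qed

lemma D_hDelta_le_D_JDelta:
  assumes "\<forall>i<n. 0 < P i" and "\<forall>i<n. 0 < Q i"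
  shows "2/3 * D_hDelta n P Q \<le> 1/2 * D_JDelta n P Q"
proof -
  have "0 \<le> (-2/3) * hell n P Q + 1/24 * Delta n P Q + 0 * Psi n P Q + 1/16 * Jdiv n P Q
      + 0 * Idiv n P Q + 0 * Tdiv n P Q"
  proof (rule divergence_comb_nonneg[OF _ _ assms])
    show "gen_comb''_numerator (-2/3) (1/24) 0 (1/16) 0 0 s
      = (s - 1)^4 * (s^2 * (3 * s^4 + 4 * s^3 + 10 * s^2 + 4 * s + 3) / 48)" for s
      by (simp add: gen_comb''_numerator_def field_simps) algebra
  qed simp
  then show ?thesis by (simp add: D_hDelta_def D_JDelta_def)
qed

lemma D_JDelta_le_D_TDelta:
  assumes "\<forall>i<n. 0 < P i" and "\<forall>i<n. 0 < Q i"
  shows "1/2 * D_JDelta n P Q \<le> 1/3 * D_TDelta n P Q"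
proof -
  have "0 \<le> 0 * hell n P Q + 1/24 * Delta n P Q + 0 * Psi n P Q + (-1/16) * Jdiv n P Q
      + 0 * Idiv n P Q + 1/3 * Tdiv n P Q"
  proof (rule divergence_comb_nonneg[OF _ _ assms])
    show "gen_comb''_numerator 0 (1/24) 0 (-1/16) 0 (1/3) s
      = (s - 1)^4 * (s^2 * (s + 1)^4 / 48)" for s
      by (simp add: gen_comb''_numerator_def field_simps) algebra
  qed simp
  then show ?thesis by (simp add: D_JDelta_def D_TDelta_def)
qed

lemma D_TDelta_le_D_TJ:
  assumes "\<forall>i<n. 0 < P i" and "\<forall>i<n. 0 < Q i"
  shows "1/3 * D_TDelta n P Q \<le> D_TJ n P Q"
proof -
  have "0 \<le> 0 * hell n P Q + 1/12 * Delta n P Q + 0 * Psi n P Q + (-1/8) * Jdiv n P Q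
      + 0 * Idiv n P Q + 2/3 * Tdiv n P Q"
  proof (rule divergence_comb_nonneg[OF _ _ assms])
    show "gen_comb''_numerator 0 (1/12) 0 (-1/8) 0 (2/3) s
      = (s - 1)^4 * (s^2 * (s + 1)^4 / 24)" for s
      by (simp add: gen_comb''_numerator_def field_simps) algebra
  qed simp
  then show ?thesis by (simp add: D_TDelta_def D_TJ_def)
qed

lemma D_TJ_le_D_Th:
  assumes "\<forall>i<n. 0 < P i" and "\<forall>i<n. 0 < Q i"
  shows "D_TJ n P Q \<le> 2/3 * D_Th n P Q"
proof -
  have "0 \<le> (-2/3) * hell n P Q + 0 * Delta n P Q + 0 * Psi n P Q + 1/8 * Jdiv n P Q
      + 0 * Idiv n P Q + (-1/3) * Tdiv n P Q"
  proof (rule divergence_comb_nonneg[OF _ _ assms])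
    show "gen_comb''_numerator (-2/3) 0 0 (1/8) 0 (-1/3) s
      = (s - 1)^4 * (s^2 * (s^2 + 1)^2 / 24)" for s
      by (simp add: gen_comb''_numerator_def field_simps) algebra
  qed simp
  then show ?thesis by (simp add: D_TJ_def D_Th_def)
qed

lemma D_Th_le_D_Jh:
  assumes "\<forall>i<n. 0 < P i" and "\<forall>i<n. 0 < Q i"
  shows "2/3 * D_Th n P Q \<le> 2 * D_Jh n P Q"
proof -
  have "0 \<le> (-4/3) * hell n P Q + 0 * Delta n P Q + 0 * Psi n P Q + 1/4 * Jdiv n P Q
      + 0 * Idiv n P Q + (-2/3) * Tdiv n P Q"
  proof (rule divergence_comb_nonneg[OF _ _ assms])
    show "gen_comb''_numerator (-4/3) 0 0 (1/4) 0 (-2/3) s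
      = (s - 1)^4 * (s^2 * (s^2 + 1)^2 / 12)" for s
      by (simp add: gen_comb''_numerator_def field_simps) algebra
  qed simp
  then show ?thesis by (simp add: D_Th_def D_Jh_def)
qed

lemma D_Jh_le_D_PsiDelta:
  assumes "\<forall>i<n. 0 < P i" and "\<forall>i<n. 0 < Q i"
  shows "2 * D_Jh n P Q \<le> 1/6 * D_PsiDelta n P Q"
proof -
  have "0 \<le> 2 * hell n P Q + (-1/24) * Delta n P Q + 1/96 * Psi n P Q + (-1/4) * Jdiv n P Q
      + 0 * Idiv n P Q + 0 * Tdiv n P Q"
  proof (rule divergence_comb_nonneg[OF _ _ assms])
    show "gen_comb''_numerator 2 (-1/24) (1/96) (-1/4) 0 0 s
      = (s - 1)^4 * ((s^8 + 4 * s^7 + s^6 + 4 * s^5 + 4 * s^4 + 4 * s^3 + s^2 + 4 * s + 1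
         + 4 * s^3 * (s - 1)^2) / 48)" for s
      by (simp add: gen_comb''_numerator_def field_simps) algebra
  qed simp
  then show ?thesis by (simp add: D_Jh_def D_PsiDelta_def)
qed

lemma D_PsiDelta_le_D_PsiI:
  assumes "\<forall>i<n. 0 < P i" and "\<forall>i<n. 0 < Q i"
  shows "1/6 * D_PsiDelta n P Q \<le> 1/5 * D_PsiI n P Q"
proof -
  have "0 \<le> 0 * hell n P Q + 1/24 * Delta n P Q + 1/480 * Psi n P Q + 0 * Jdiv n P Q
      + (-1/5) * Idiv n P Q + 0 * Tdiv n P Q"
  proof (rule divergence_comb_nonneg[OF _ _ assms])
    show "gen_comb''_numerator 0 (1/24) (1/480) 0 (-1/5) 0 s
      = (s - 1)^4 * ((s^8 + 4 * s^7 + 13 * s^6 + 32 * s^5 + 44 * s^4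
         + 32 * s^3 + 13 * s^2 + 4 * s + 1) / 240)" for s
      by (simp add: gen_comb''_numerator_def field_simps) algebra
  qed simp
  then show ?thesis by (simp add: D_PsiDelta_def D_PsiI_def)
qed

lemma D_PsiI_le_D_Psih:
  assumes "\<forall>i<n. 0 < P i" and "\<forall>i<n. 0 < Q i"
  shows "1/5 * D_PsiI n P Q \<le> 2/9 * D_Psih n P Q"
proof -
  have "0 \<le> (-2/9) * hell n P Q + 0 * Delta n P Q + 1/720 * Psi n P Q + 0 * Jdiv n P Q
      + 1/5 * Idiv n P Q + 0 * Tdiv n P Q"
  proof (rule divergence_comb_nonneg[OF _ _ assms])
    show "gen_comb''_numerator (-2/9) 0 (1/720) 0 (1/5) 0 s
      = (s - 1)^4 * ((s^8 + 4 * s^7 + 13 * s^6 + 12 * s^5 + 24 * s^4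
         + 12 * s^3 + 13 * s^2 + 4 * s + 1) / 360)" for s
      by (simp add: gen_comb''_numerator_def field_simps) algebra
  qed simp
  then show ?thesis by (simp add: D_PsiI_def D_Psih_def)
qed

lemma D_Psih_le_D_PsiJ:
  assumes "\<forall>i<n. 0 < P i" and "\<forall>i<n. 0 < Q i"
  shows "2/9 * D_Psih n P Q \<le> 1/4 * D_PsiJ n P Q"
proof -
  have "0 \<le> 2/9 * hell n P Q + 0 * Delta n P Q + 1/576 * Psi n P Q + (-1/32) * Jdiv n P Q
      + 0 * Idiv n P Q + 0 * Tdiv n P Q"
  proof (rule divergence_comb_nonneg[OF _ _ assms])
    show "gen_comb''_numerator (2/9) 0 (1/576) (-1/32) 0 0 s
      = (s - 1)^4 * ((s^8 + 4 * s^7 + 4 * s^6 + 12 * s^5 + 6 * s^4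
         + 12 * s^3 + 4 * s^2 + 4 * s + 1) / 288)" for s
      by (simp add: gen_comb''_numerator_def field_simps) algebra
  qed simp
  then show ?thesis by (simp add: D_Psih_def D_PsiJ_def)
qed

lemma D_PsiJ_le_D_PsiT:
  assumes "\<forall>i<n. 0 < P i" and "\<forall>i<n. 0 < Q i"
  shows "1/4 * D_PsiJ n P Q \<le> 1/3 * D_PsiT n P Q"
proof -
  have "0 \<le> 0 * hell n P Q + 0 * Delta n P Q + 1/192 * Psi n P Q + 1/32 * Jdiv n P Q
      + 0 * Idiv n P Q + (-1/3) * Tdiv n P Q"
  proof (rule divergence_comb_nonneg[OF _ _ assms])
    show "gen_comb''_numerator 0 0 (1/192) (1/32) 0 (-1/3) s
      = (s - 1)^4 * ((s^8 + 4 * s^7 + 8 * s^6 + 12 * s^5 + 14 * s^4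
         + 12 * s^3 + 8 * s^2 + 4 * s + 1) / 96)" for s
      by (simp add: gen_comb''_numerator_def field_simps) algebra
  qed simp
  then show ?thesis by (simp add: D_PsiJ_def D_PsiT_def)
qed

theorem theorem5p1:
  fixes n :: nat and P Q :: "nat \<Rightarrow> real"
  assumes "n \<ge> 2" and "P \<in> Gamma n" and "Q \<in> Gamma n"
  shows "D_IDelta n P Q \<le> 2/3 * D_hDelta n P Q \<and>
         2/3 * D_hDelta n P Q \<le> 2 * D_hI n P Q \<and>
         2 * D_hI n P Q \<le> D_TJ n P Q \<and>
         2/3 * D_hDelta n P Q \<le> 1/2 * D_JDelta n P Q \<and>
         1/2 * D_JDelta n P Q \<le> 1/3 * D_TDelta n P Q \<and>
         1/3 * D_TDelta n P Q \<le> D_TJ n P Q \<and>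
         D_TJ n P Q \<le> 2/3 * D_Th n P Q \<and>
         2/3 * D_Th n P Q \<le> 2 * D_Jh n P Q \<and>
         2 * D_Jh n P Q \<le> 1/6 * D_PsiDelta n P Q \<and>
         1/6 * D_PsiDelta n P Q \<le> 1/5 * D_PsiI n P Q \<and>
         1/5 * D_PsiI n P Q \<le> 2/9 * D_Psih n P Q \<and>
         2/9 * D_Psih n P Q \<le> 1/4 * D_PsiJ n P Q \<and>
         1/4 * D_PsiJ n P Q \<le> 1/3 * D_PsiT n P Q"
proof -
  have "\<forall>i<n. 0 < P i" "\<forall>i<n. 0 < Q i"
    using assms(2,3) by (simp_all add: Gamma_def)
  then show ?thesis
    by (intro conjI D_IDelta_le_D_hDelta D_hDelta_le_D_hI D_hI_le_D_TJ
        D_hDelta_le_D_JDelta D_JDelta_le_D_TDelta D_TDelta_le_D_TJ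
        D_TJ_le_D_Th D_Th_le_D_Jh D_Jh_le_D_PsiDelta D_PsiDelta_le_D_PsiI
        D_PsiI_le_D_Psih D_Psih_le_D_PsiJ D_PsiJ_le_D_PsiT)
qed

end
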